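(* Let $k\ge2$, $n\ge k$, and $\beta=\sum_{i=1}^n i^{k-1}$. In the position-randomized auction setting described in the context, for every common initial bid sequence and every common permutation distribution used by the $k-1$ disadvantaged bidders, the adversary ${\mathcal A}$ has a position-randomized strategy under which the expected number of objects he wins is at least $\frac{\beta-1}{n^{k-1}}$.
   Context: Auction model: there are $k$ bidders, one adversary ${\mathcal A}$ and $k-1$ disadvantaged bidders, and $n$ objects auctioned simultaneously. Each object is won by the highest bidder on it; if $m$ bidders tie for the highest bid, each wins with probability $1/m$. A position-randomized bidding algorithm: a bidder chooses an initial sequence $x_1,\dots,x_n$ of positive reals with $\sum x_j\le 1$ (budget) and a probability distribution on permutations $\sigma$ of $\{1,\dots,n\}$; he draws $\sigma$ and bids $x_j$ on object $\sigma(j)$. All disadvantaged bidders use the same initial sequence and the same permutation distribution, drawing their permutations independently; ${\mathcal A}$ knows their algorithm, and his permutation is drawn independently of theirs. *)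

theory Defs
  imports "HOL-Probability.Probability" "HOL-Combinatorics.Permutations"
begin

text \<open>Objects are 0,...,n-1; positions j are 0,...,n-1. A permutation sigma
(sigma permutes {..<n}) places the bid x j on object sigma j, so the bid on
object o is x (inv sigma o).\<close>

definition perm_dist :: "nat \<Rightarrow> (nat \<Rightarrow> nat) pmf \<Rightarrow> bool" where
  "perm_dist n p \<longleftrightarrow> set_pmf p \<subseteq> {\<sigma>. \<sigma> permutes {..<n}}"

definition valid_bids :: "nat \<Rightarrow> (nat \<Rightarrow> real) \<Rightarrow> bool" where
  "valid_bids n x \<longleftrightarrow> (\<forall>j<n. x j > 0) \<and> (\<Sum>j<n. x j) \<le> 1"

definition win_share :: "real \<Rightarrow> real list \<Rightarrow> real" where
  "win_share a bs = (if (\<forall>b\<in>set bs. b \<le> a)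
     then 1 / real (1 + length (filter (\<lambda>b. b = a) bs)) else 0)"

text \<open>Expected number of objects won by the adversary (bids y, permutation
distribution q) against k-1 disadvantaged bidders each using bids x and an
independent permutation drawn from p.\<close>

definition expected_wins ::
  "nat \<Rightarrow> nat \<Rightarrow> (nat \<Rightarrow> real) \<Rightarrow> (nat \<Rightarrow> nat) pmf \<Rightarrow> (nat \<Rightarrow> real) \<Rightarrow> (nat \<Rightarrow> nat) pmf \<Rightarrow> real" where
  "expected_wins n k x p y q =
     measure_pmf.expectation (pair_pmf q (Pi_pmf {..<k-1} id (\<lambda>_. p)))
       (\<lambda>(\<rho>, \<sigma>s). \<Sum>obj<n. win_share (y (inv \<rho> obj)) (map (\<lambda>i. x (inv (\<sigma>s i) obj)) [0..<k-1]))"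

end

theory Submission
  imports Defs
begin

(* The adversary halves his smallest bid x j0, spends the freed x j0 / 2 on raising each
   other bid by x j0 / (2 n), and places his bids by a uniformly random cyclic rotation.
   A raised bid x j + x j0 / (2 n) strictly beats x j0 and every x i \<le> x j, so the numbers
   c j of opponent bids beaten by the adversary's bids dominate 2, ..., n in sorted order,
   and the sum of the c j^(k-1) is at least 2^(k-1) + ... + n^(k-1).
   An object on which the adversary bids t is won outright when all k - 1 independent
   opponents bid less, which has probability F^(k-1), F being the probability that one
   opponent bids below t there.  Under the rotation each object carries each adversary bid
   with probability 1/n, and for a fixed bid y j the values F sum to c j over the objects;
   Jensen's inequality for t^(k-1) then bounds the expected number of wins from below by
   the sum of the c j^(k-1) / n^(k-1). *)

lemma add_mod_inverse:
  fixes i c n :: nat assumes "i < n"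
  shows "((i + c) mod n + (n - c mod n)) mod n = i"
proof -
  have "c = n * (c div n) + c mod n" by simp
  moreover have "c mod n < n" using assms by simp
  ultimately have "i + c + (n - c mod n) = i + n * (c div n) + n"
    by linarith
  then have "(i + c + (n - c mod n)) mod n = i"
    using assms by simp
  then show ?thesis
    by (simp add: mod_add_left_eq)
qed

lemma bij_betw_add_mod: "bij_betw (\<lambda>j. (j + c) mod n) {..<n} {..<(n::nat)}"
proof -
  have "inj_on (\<lambda>j. (j + c) mod n) {..<n}"
    by (rule inj_on_inverseI[where g = "\<lambda>j. (j + (n - c mod n)) mod n"])
       (use add_mod_inverse in blast)
  then show ?thesis
    by (simp add: bij_betw_def endo_inj_surj image_subset_iff)
qed

definition rotation :: "nat \<Rightarrow> nat \<Rightarrow> nat \<Rightarrow> nat" where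
  "rotation n s j = (if j < n then (j + (n - s)) mod n else j)"

lemma rotation_permutes: "rotation n s permutes {..<n}"
proof (rule bij_imp_permutes)
  show "bij_betw (rotation n s) {..<n} {..<n}"
    using bij_betw_add_mod[of "n - s" n]
    by (rule bij_betw_cong[THEN iffD1, rotated]) (simp add: rotation_def)
qed (simp add: rotation_def)

lemma inv_rotation:
  assumes "s < n" "obj < n"
  shows "inv (rotation n s) obj = (obj + s) mod n"
proof -
  have "rotation n s ((obj + s) mod n) = obj"
    using add_mod_inverse[OF assms(2), of s] assms by (simp add: rotation_def)
  then show ?thesis
    using permutes_inv_eq[OF rotation_permutes] by blast
qed

definition rotations :: "nat \<Rightarrow> (nat \<Rightarrow> nat) pmf" where
  "rotations n = map_pmf (rotation n) (pmf_of_set {..<n})"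

lemma set_pmf_rotations: "n > 0 \<Longrightarrow> set_pmf (rotations n) = rotation n ` {..<n}"
  by (simp add: rotations_def set_pmf_of_set lessThan_empty_iff)

lemma perm_dist_rotations: "n > 0 \<Longrightarrow> perm_dist n (rotations n)"
  by (auto simp: perm_dist_def set_pmf_rotations rotation_permutes)

lemma expectation_rotations_inv:
  fixes g :: "nat \<Rightarrow> real"
  assumes "obj < n"
  shows "measure_pmf.expectation (rotations n) (\<lambda>\<rho>. g (inv \<rho> obj)) = (\<Sum>j<n. g j) / n"
proof -
  have "measure_pmf.expectation (rotations n) (\<lambda>\<rho>. g (inv \<rho> obj))
      = (\<Sum>s<n. g (inv (rotation n s) obj)) / n"
    unfolding rotations_def integral_map_pmf using assms by (subst integral_pmf_of_set) auto
  also have "(\<Sum>s<n. g (inv (rotation n s) obj)) = (\<Sum>s<n. g ((s + obj) mod n))"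
    using assms by (intro sum.cong) (simp_all add: inv_rotation add.commute)
  also have "\<dots> = (\<Sum>j<n. g j)"
    by (rule sum.reindex_bij_betw[OF bij_betw_add_mod])
  finally show ?thesis .
qed

lemma finite_set_pmf_perm_dist: "perm_dist n p \<Longrightarrow> finite (set_pmf p)"
  unfolding perm_dist_def by (rule finite_subset[OF _ finite_permutations]) auto

lemma sum_expectation_perm_dist_inv:
  fixes g :: "nat \<Rightarrow> real"
  assumes "perm_dist n p"
  shows "(\<Sum>obj<n. measure_pmf.expectation p (\<lambda>\<sigma>. g (inv \<sigma> obj))) = (\<Sum>j<n. g j)"
proof -
  have "(\<Sum>obj<n. measure_pmf.expectation p (\<lambda>\<sigma>. g (inv \<sigma> obj)))
      = measure_pmf.expectation p (\<lambda>\<sigma>. \<Sum>obj<n. g (inv \<sigma> obj))"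
    using finite_set_pmf_perm_dist[OF assms]
    by (intro Bochner_Integration.integral_sum[symmetric]) (simp add: integrable_measure_pmf_finite)
  also have "\<dots> = measure_pmf.expectation p (\<lambda>_. \<Sum>j<n. g j)"
  proof (intro integral_cong_AE AE_pmfI)
    fix \<sigma> assume "\<sigma> \<in> set_pmf p"
    then have "bij_betw (inv \<sigma>) {..<n} {..<n}"
      using assms permutes_inv permutes_imp_bij by (fastforce simp: perm_dist_def)
    then show "(\<Sum>obj<n. g (inv \<sigma> obj)) = (\<Sum>j<n. g j)"
      by (rule sum.reindex_bij_betw)
  qed simp_all
  finally show ?thesis by simp
qed

lemma expectation_pair_pmf_finite:
  fixes f :: "'a \<times> 'b \<Rightarrow> real"
  assumes "finite (set_pmf A)" "finite (set_pmf B)"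
  shows "measure_pmf.expectation (pair_pmf A B) f =
         measure_pmf.expectation A (\<lambda>a. measure_pmf.expectation B (\<lambda>b. f (a, b)))"
proof -
  have "measure_pmf.expectation (pair_pmf A B) f
      = (\<Sum>(a, b)\<in>set_pmf A \<times> set_pmf B. f (a, b) * (pmf A a * pmf B b))"
    using assms by (subst integral_measure_pmf_real[where A = "set_pmf A \<times> set_pmf B"])
                   (auto simp: pmf_pair intro!: sum.cong)
  also have "\<dots> = (\<Sum>a\<in>set_pmf A. pmf A a * (\<Sum>b\<in>set_pmf B. pmf B b * f (a, b)))"
    by (simp add: sum.cartesian_product[symmetric] sum_distrib_left mult_ac)
  also have "\<dots> = measure_pmf.expectation A (\<lambda>a. measure_pmf.expectation B (\<lambda>b. f (a, b)))"
    using assms by (simp add: integral_measure_pmf_real[where A = "set_pmf A"]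
                              integral_measure_pmf_real[where A = "set_pmf B"] mult.commute)
  finally show ?thesis .
qed

lemma card_mult_power_mean_le:
  fixes a :: "'a \<Rightarrow> real"
  assumes "finite S" "S \<noteq> {}" "\<And>i. i \<in> S \<Longrightarrow> a i \<ge> 0"
  shows "real (card S) * ((\<Sum>i\<in>S. a i) / card S) ^ m \<le> (\<Sum>i\<in>S. a i ^ m)"
proof -
  have convex: "convex_on {0::real..} (\<lambda>t. t ^ m)"
    using convex_power_even[of m] convex_power_odd[of m] convex_on_subset by blast
  have card: "real (card S) > 0"
    using assms by (simp add: card_gt_0_iff)
  have "(\<Sum>i\<in>S. (1 / card S) *\<^sub>R a i) ^ m \<le> (\<Sum>i\<in>S. (1 / card S) * a i ^ m)"
    using assms card by (intro convex_on_sum[OF assms(1,2) convex]) auto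
  then have "((\<Sum>i\<in>S. a i) / card S) ^ m \<le> (\<Sum>i\<in>S. a i ^ m) / card S"
    by (simp add: sum_divide_distrib)
  then show ?thesis
    using card by (simp add: field_simps)
qed

lemma sum_rank_ge:
  fixes x :: "'a \<Rightarrow> 'c::linorder" and f :: "nat \<Rightarrow> 'b::ordered_comm_monoid_add"
  assumes "finite S" "mono f"
  shows "(\<Sum>i=1..card S. f i) \<le> (\<Sum>j\<in>S. f (card {i\<in>S. x i \<le> x j}))"
  using assms(1)
proof (induction rule: finite_ranking_induct[where f = x])
  case empty
  then show ?case by simp
next
  case (insert M S)
  show ?case
  proof (cases "M \<in> S")
    case True
    then show ?thesis using insert.IH by (simp add: insert_absorb)
  next
    case False
    let ?T = "insert M S"
    have "(\<Sum>i=1..card ?T. f i) = (\<Sum>i=1..card S. f i) + f (card ?T)"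
      using insert.hyps(1) False by simp
    also have "\<dots> \<le> (\<Sum>j\<in>S. f (card {i\<in>?T. x i \<le> x j})) + f (card {i\<in>?T. x i \<le> x M})"
    proof (intro add_mono order.trans[OF insert.IH] sum_mono)
      show "f (card {i\<in>S. x i \<le> x j}) \<le> f (card {i\<in>?T. x i \<le> x j})" for j
        using insert.hyps(1) by (intro monoD[OF assms(2)] card_mono) auto
      have "{i\<in>?T. x i \<le> x M} = ?T"
        using insert.hyps(2) by auto
      then show "f (card ?T) \<le> f (card {i\<in>?T. x i \<le> x M})" by simp
    qed
    also have "\<dots> = (\<Sum>j\<in>?T. f (card {i\<in>?T. x i \<le> x j}))"
      using insert.hyps(1) False by (simp add: add.commute)
    finally show ?thesis .
  qed
qed

lemma win_share_ge_prod_less: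
  "(\<Prod>i<m. of_bool (f i < a)) \<le> win_share a (map f [0..<m])"
proof (cases "\<forall>i<m. f i < a")
  case True
  then have "filter (\<lambda>b. b = a) (map f [0..<m]) = []"
    by (auto simp: filter_empty_conv)
  then show ?thesis
    using True by (auto simp: win_share_def less_imp_le)
next
  case False
  then have "(\<Prod>i<m. of_bool (f i < a) :: real) = 0"
    by (auto intro: prod_zero)
  moreover have "win_share a (map f [0..<m]) \<ge> 0"
    by (simp add: win_share_def)
  ultimately show ?thesis
    by linarith
qed

definition raised_bids :: "nat \<Rightarrow> (nat \<Rightarrow> real) \<Rightarrow> nat \<Rightarrow> nat \<Rightarrow> real" where
  "raised_bids n x j\<^sub>0 j = (if j = j\<^sub>0 then x j\<^sub>0 / 2 else x j + x j\<^sub>0 / (2 * real n))"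

lemma valid_bids_raised_bids:
  assumes "valid_bids n x" "j\<^sub>0 < n"
  shows "valid_bids n (raised_bids n x j\<^sub>0)"
proof -
  let ?d = "x j\<^sub>0 / (2 * real n)"
  have pos: "x j\<^sub>0 > 0" "?d > 0"
    using assms by (auto simp: valid_bids_def)
  have "(\<Sum>j<n. raised_bids n x j\<^sub>0 j) = x j\<^sub>0 / 2 + (\<Sum>j\<in>{..<n} - {j\<^sub>0}. x j + ?d)"
    using assms(2) by (simp add: sum.remove[of _ j\<^sub>0] raised_bids_def)
  also have "\<dots> = (\<Sum>j<n. x j) - x j\<^sub>0 / 2 + real (n - 1) * ?d"
    using assms(2) by (simp add: sum.distrib sum_diff1)
  also have "real (n - 1) * ?d \<le> x j\<^sub>0 / 2"
    using assms(2) pos by (simp add: field_simps)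
  finally show ?thesis
    using assms pos by (auto simp: valid_bids_def raised_bids_def intro: add_pos_pos)
qed

lemma card_less_raised_bids:
  assumes "valid_bids n x" "j\<^sub>0 < n" "\<And>i. i < n \<Longrightarrow> x j\<^sub>0 \<le> x i" "j < n" "j \<noteq> j\<^sub>0"
  shows "Suc (card {i\<in>{..<n} - {j\<^sub>0}. x i \<le> x j}) \<le> card {i\<in>{..<n}. x i < raised_bids n x j\<^sub>0 j}"
proof -
  have "x j\<^sub>0 / (2 * real n) > 0"
    using assms by (auto simp: valid_bids_def)
  moreover have "x j\<^sub>0 \<le> x j"
    using assms by simp
  ultimately have "insert j\<^sub>0 {i\<in>{..<n} - {j\<^sub>0}. x i \<le> x j} \<subseteq> {i\<in>{..<n}. x i < raised_bids n x j\<^sub>0 j}"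
    using assms(2,5) by (auto simp: raised_bids_def)
  then have "card (insert j\<^sub>0 {i\<in>{..<n} - {j\<^sub>0}. x i \<le> x j}) \<le> card {i\<in>{..<n}. x i < raised_bids n x j\<^sub>0 j}"
    by (intro card_mono) auto
  then show ?thesis
    by simp
qed

lemma sum_power_card_less_raised_bids:
  assumes "valid_bids n x" "j\<^sub>0 < n" "\<And>i. i < n \<Longrightarrow> x j\<^sub>0 \<le> x i"
  shows "(\<Sum>i=1..n. real i ^ m) - 1 \<le> (\<Sum>j<n. real (card {i\<in>{..<n}. x i < raised_bids n x j\<^sub>0 j}) ^ m)"
proof -
  let ?S = "{..<n} - {j\<^sub>0}"
  obtain n' where n': "n = Suc n'"
    using assms(2) by (cases n) auto
  have "(\<Sum>i=1..n. real i ^ m) = 1 + (\<Sum>i=Suc 1..Suc n'. real i ^ m)"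
    by (subst sum.atLeast_Suc_atMost) (simp_all add: n')
  also have "(\<Sum>i=Suc 1..Suc n'. real i ^ m) = (\<Sum>i=1..card ?S. real (Suc i) ^ m)"
    using assms(2) by (subst sum.shift_bounds_cl_Suc_ivl) (simp add: n')
  finally have "(\<Sum>i=1..n. real i ^ m) - 1 = (\<Sum>i=1..card ?S. real (Suc i) ^ m)"
    by simp
  also have "\<dots> \<le> (\<Sum>j\<in>?S. real (Suc (card {i\<in>?S. x i \<le> x j})) ^ m)"
    by (rule sum_rank_ge) (simp_all add: mono_def power_mono)
  also have "\<dots> \<le> (\<Sum>j\<in>?S. real (card {i\<in>{..<n}. x i < raised_bids n x j\<^sub>0 j}) ^ m)"
    using card_less_raised_bids[OF assms] by (intro sum_mono power_mono of_nat_mono) auto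
  also have "\<dots> \<le> (\<Sum>j<n. real (card {i\<in>{..<n}. x i < raised_bids n x j\<^sub>0 j}) ^ m)"
    by (rule sum_mono2) auto
  finally show ?thesis .
qed

lemma expected_wins_ge_beat_probability:
  fixes x y :: "nat \<Rightarrow> real"
  assumes "perm_dist n p" "finite (set_pmf q)"
  shows "measure_pmf.expectation q (\<lambda>\<rho>. \<Sum>obj<n.
           measure_pmf.expectation p (\<lambda>\<sigma>. of_bool (x (inv \<sigma> obj) < y (inv \<rho> obj))) ^ (k - 1))
         \<le> expected_wins n k x p y q"
proof -
  define P where "P = Pi_pmf {..<k - 1} id (\<lambda>_. p)"
  have fin_p: "finite (set_pmf p)"
    by (rule finite_set_pmf_perm_dist[OF assms(1)])
  have fin_P: "finite (set_pmf P)"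
    unfolding P_def using fin_p by (subst set_Pi_pmf) auto
  define beats_all where
    "beats_all (\<rho> :: nat \<Rightarrow> nat) (\<sigma>s :: nat \<Rightarrow> nat \<Rightarrow> nat) obj =
       (\<Prod>i<k - 1. of_bool (x (inv (\<sigma>s i) obj) < y (inv \<rho> obj)) :: real)"
    for \<rho> \<sigma>s obj
  have independence:
    "measure_pmf.expectation P (\<lambda>\<sigma>s. beats_all \<rho> \<sigma>s obj)
       = measure_pmf.expectation p (\<lambda>\<sigma>. of_bool (x (inv \<sigma> obj) < y (inv \<rho> obj))) ^ (k - 1)" for \<rho> obj
    unfolding P_def beats_all_def
    by (subst expectation_prod_Pi_pmf) (use fin_p in \<open>auto simp: integrable_measure_pmf_finite\<close>)
  have "measure_pmf.expectation q (\<lambda>\<rho>. \<Sum>obj<n.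
           measure_pmf.expectation p (\<lambda>\<sigma>. of_bool (x (inv \<sigma> obj) < y (inv \<rho> obj))) ^ (k - 1))
      = measure_pmf.expectation q (\<lambda>\<rho>. measure_pmf.expectation P (\<lambda>\<sigma>s. \<Sum>obj<n. beats_all \<rho> \<sigma>s obj))"
    using fin_P by (simp add: independence Bochner_Integration.integral_sum integrable_measure_pmf_finite)
  also have "\<dots> = measure_pmf.expectation (pair_pmf q P) (\<lambda>(\<rho>, \<sigma>s). \<Sum>obj<n. beats_all \<rho> \<sigma>s obj)"
    by (simp add: expectation_pair_pmf_finite[OF assms(2) fin_P])
  also have "\<dots> \<le> expected_wins n k x p y q"
    unfolding expected_wins_def P_def[symmetric] beats_all_def
    using assms(2) fin_P
    by (intro integral_mono) (auto simp: integrable_measure_pmf_finite intro!: sum_mono win_share_ge_prod_less)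
  finally show ?thesis .
qed

lemma expected_wins_rotations_ge:
  assumes "perm_dist n p" "n > 0"
  shows "(\<Sum>j<n. real (card {i\<in>{..<n}. x i < y j}) ^ (k - 1)) / real n ^ (k - 1)
         \<le> expected_wins n k x p y (rotations n)"
proof -
  define m where "m = k - 1"
  define F where "F obj t = measure_pmf.expectation p (\<lambda>\<sigma>. of_bool (x (inv \<sigma> obj) < t) :: real)"
    for obj t
  have mean: "real n * (real (card {i\<in>{..<n}. x i < t}) / n) ^ m \<le> (\<Sum>obj<n. F obj t ^ m)" for t
  proof -
    have "(\<Sum>obj<n. F obj t) = real (card {i\<in>{..<n}. x i < t})"
      using sum_expectation_perm_dist_inv[OF assms(1), of "\<lambda>j. of_bool (x j < t)"]
      by (simp add: F_def Int_def)
    moreover have "F obj t \<ge> 0" for obj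
      unfolding F_def by (intro integral_nonneg_AE) auto
    moreover have "{..<n} \<noteq> {}"
      using assms(2) by auto
    ultimately show ?thesis
      using card_mult_power_mean_le[of "{..<n}" "\<lambda>obj. F obj t" m] by simp
  qed
  have "(\<Sum>j<n. real (card {i\<in>{..<n}. x i < y j}) ^ m) / real n ^ m
      = (\<Sum>j<n. real n * (real (card {i\<in>{..<n}. x i < y j}) / n) ^ m) / n"
    using assms(2) by (simp add: sum_divide_distrib power_divide)
  also have "\<dots> \<le> (\<Sum>j<n. \<Sum>obj<n. F obj (y j) ^ m) / n"
    by (intro divide_right_mono sum_mono mean) simp
  also have "\<dots> = (\<Sum>obj<n. (\<Sum>j<n. F obj (y j) ^ m) / n)"
    by (subst sum.swap) (simp add: sum_divide_distrib)
  also have "\<dots> = (\<Sum>obj<n. measure_pmf.expectation (rotations n) (\<lambda>\<rho>. F obj (y (inv \<rho> obj)) ^ m))"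
    by (intro sum.cong refl expectation_rotations_inv[symmetric]) simp
  also have "\<dots> = measure_pmf.expectation (rotations n) (\<lambda>\<rho>. \<Sum>obj<n. F obj (y (inv \<rho> obj)) ^ m)"
    using assms(2)
    by (intro Bochner_Integration.integral_sum[symmetric]) (simp add: integrable_measure_pmf_finite set_pmf_rotations)
  also have "\<dots> \<le> expected_wins n k x p y (rotations n)"
    unfolding F_def m_def
    using assms by (intro expected_wins_ge_beat_probability) (simp_all add: set_pmf_rotations)
  finally show ?thesis
    unfolding m_def .
qed

theorem lemma4p2:
  fixes k n :: nat and x :: "nat \<Rightarrow> real" and p :: "(nat \<Rightarrow> nat) pmf"
  assumes "k \<ge> 2" and "n \<ge> k"
    and "valid_bids n x" and "perm_dist n p"
  shows "\<exists>y q. valid_bids n y \<and> perm_dist n q \<and>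
           expected_wins n k x p y q \<ge>
             ((\<Sum>i=1..n. real i ^ (k - 1)) - 1) / real n ^ (k - 1)"
proof -
  have "n > 0"
    using assms(1,2) by simp
  obtain j\<^sub>0 where j\<^sub>0: "j\<^sub>0 < n" "\<And>i. i < n \<Longrightarrow> x j\<^sub>0 \<le> x i"
    using arg_min_least[of "{..<n}" _ x] arg_min_if_finite(1)[of "{..<n}" x] \<open>n > 0\<close> by auto
  let ?y = "raised_bids n x j\<^sub>0"
  have "((\<Sum>i=1..n. real i ^ (k - 1)) - 1) / real n ^ (k - 1)
      \<le> (\<Sum>j<n. real (card {i\<in>{..<n}. x i < ?y j}) ^ (k - 1)) / real n ^ (k - 1)"
    using sum_power_card_less_raised_bids[OF assms(3) j\<^sub>0] by (intro divide_right_mono) auto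
  also have "\<dots> \<le> expected_wins n k x p ?y (rotations n)"
    by (rule expected_wins_rotations_ge[OF assms(4) \<open>n > 0\<close>])
  finally show ?thesis
    using valid_bids_raised_bids[OF assms(3) j\<^sub>0(1)] perm_dist_rotations[OF \<open>n > 0\<close>] by blast
qed

end
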